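(* Let $\kappa$ be an infinite cardinal and $B_0=\{(X,\,X\cap Z,\,Z): X,Z\in\mathcal{F}(\kappa),\ X\sim Z\}$. Every complemented bounded sublattice $L$ of $S$ with $B_0\subsetneq L$ contains an element $(A,B,C)$ with $B\not\subseteq A$.
   Context: $\mathcal{F}(\kappa)$ is the Boolean lattice of subsets $X\subseteq\kappa$ that are finite or cofinite. For $X,Z\in\mathcal{F}(\kappa)$, $X\sim Z$ means that either both $X,Z$ are finite or both $\kappa\setminus X,\kappa\setminus Z$ are finite. Let $\mu(A,B,C)=(A\cap B)\cup(A\cap C)\cup(B\cap C)$; a triple is balanced if $A\cap B=A\cap C=B\cap C$. $S$ is the set of balanced triples $(A,B,C)\in\mathcal{F}(\kappa)^3$ with $C\setminus\mu(A,B,C)$ finite, ordered componentwise; it is a bounded lattice with componentwise meet, join $(A,B,C)\vee(A',B',C')=(U_1\cup m,U_2\cup m,U_3\cup m)$ where $U_1=A\cup A'$, $U_2=B\cup B'$, $U_3=C\cup C'$, $m=\mu(U_1,U_2,U_3)$, and bounds $(\emptyset,\emptyset,\emptyset)$, $(\kappa,\kappa,\kappa)$. A complemented bounded sublattice is a sublattice containing both bounds in which every element has a complement. (In the paper the set $B_0$ is called $B$.) *)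

theory Defs
  imports Main
begin

text \<open>The cardinal kappa is represented by the universe of an infinite type 'a.\<close>

definition Fk :: "'a set set" where
  "Fk = {X. finite X \<or> finite (- X)}"

definition simF :: "'a set \<Rightarrow> 'a set \<Rightarrow> bool" where
  "simF X Z \<longleftrightarrow> (finite X \<and> finite Z) \<or> (finite (- X) \<and> finite (- Z))"

definition mu :: "'a set \<Rightarrow> 'a set \<Rightarrow> 'a set \<Rightarrow> 'a set" where
  "mu A B C = (A \<inter> B) \<union> (A \<inter> C) \<union> (B \<inter> C)"

definition balanced :: "'a set \<Rightarrow> 'a set \<Rightarrow> 'a set \<Rightarrow> bool" where
  "balanced A B C \<longleftrightarrow> A \<inter> B = A \<inter> C \<and> A \<inter> C = B \<inter> C"

definition S :: "('a set \<times> 'a set \<times> 'a set) set" where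
  "S = {(A, B, C). A \<in> Fk \<and> B \<in> Fk \<and> C \<in> Fk \<and> balanced A B C \<and> finite (C - mu A B C)}"

definition Smeet :: "'a set \<times> 'a set \<times> 'a set \<Rightarrow> 'a set \<times> 'a set \<times> 'a set \<Rightarrow> 'a set \<times> 'a set \<times> 'a set" where
  "Smeet x y = (case x of (A, B, C) \<Rightarrow> case y of (A', B', C') \<Rightarrow> (A \<inter> A', B \<inter> B', C \<inter> C'))"

definition Sjoin :: "'a set \<times> 'a set \<times> 'a set \<Rightarrow> 'a set \<times> 'a set \<times> 'a set \<Rightarrow> 'a set \<times> 'a set \<times> 'a set" where
  "Sjoin x y = (case x of (A, B, C) \<Rightarrow> case y of (A', B', C') \<Rightarrow>
     (let U1 = A \<union> A'; U2 = B \<union> B'; U3 = C \<union> C'; m = mu U1 U2 U3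
      in (U1 \<union> m, U2 \<union> m, U3 \<union> m)))"

definition Sbot :: "'a set \<times> 'a set \<times> 'a set" where
  "Sbot = ({}, {}, {})"

definition Stop :: "'a set \<times> 'a set \<times> 'a set" where
  "Stop = (UNIV, UNIV, UNIV)"

definition complemented_bounded_sublattice :: "('a set \<times> 'a set \<times> 'a set) set \<Rightarrow> bool" where
  "complemented_bounded_sublattice L \<longleftrightarrow>
     L \<subseteq> S \<and> Sbot \<in> L \<and> Stop \<in> L \<and>
     (\<forall>x\<in>L. \<forall>y\<in>L. Smeet x y \<in> L \<and> Sjoin x y \<in> L) \<and>
     (\<forall>x\<in>L. \<exists>y\<in>L. Smeet x y = Sbot \<and> Sjoin x y = Stop)"

definition B0 :: "('a set \<times> 'a set \<times> 'a set) set" where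
  "B0 = {(X, X \<inter> Z, Z) | X Z. X \<in> Fk \<and> Z \<in> Fk \<and> simF X Z}"

end

theory Submission
  imports Defs
begin

text \<open>Suppose every \<open>(A, B, C) \<in> L\<close> has \<open>B \<subseteq> A\<close>. Balancedness then forces \<open>B = A \<inter> C\<close> and
  \<open>C - A\<close> finite, so an element of \<open>L\<close> outside \<open>B\<^sub>0\<close> must have \<open>A\<close> cofinite and \<open>C\<close> finite.
  Its complement \<open>(A', B', C')\<close> is disjoint from it in the first coordinate, so \<open>A'\<close> and
  hence \<open>C'\<close> are finite. But with \<open>B \<subseteq> C\<close> and \<open>B' \<subseteq> C'\<close> the third coordinate of the join
  is just \<open>C \<union> C'\<close>, a finite set, which cannot be all of \<open>\<kappa>\<close>.\<close>

lemma S_snd_subset_fstD: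
  assumes "(A, B, C) \<in> S" and "B \<subseteq> A"
  shows "B = A \<inter> C" and "finite (C - A)"
  using assms unfolding S_def balanced_def mu_def
  by (auto elim!: finite_subset[rotated])

lemma Sjoin_third_eq_Un:
  assumes "B \<subseteq> C" and "B' \<subseteq> C'"
  shows "snd (snd (Sjoin (A, B, C) (A', B', C'))) = C \<union> C'"
  using assms unfolding Sjoin_def mu_def Let_def by auto

lemma finite_and_cofinite_if_not_simF:
  assumes "A \<in> Fk" and "C \<in> Fk" and "finite (C - A)" and "\<not> simF A C"
  shows "finite C" and "finite (- A)"
proof -
  have "\<not> finite A"
  proof
    assume "finite A"
    with assms(3) have "finite C" using finite_Diff2 by blast
    with \<open>finite A\<close> assms(4) show False unfolding simF_def by blast
  qed
  then show A_cofin: "finite (- A)"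
    using assms(1) unfolding Fk_def by blast
  have "\<not> finite (- C)"
    using A_cofin assms(4) unfolding simF_def by blast
  then show "finite C"
    using assms(2) unfolding Fk_def by blast
qed

theorem corollary5p5:
  fixes L :: "('a set \<times> 'a set \<times> 'a set) set"
  assumes "infinite (UNIV :: 'a set)"
    and "complemented_bounded_sublattice L"
    and "B0 \<subset> L"
  shows "\<exists>(A, B, C)\<in>L. \<not> B \<subseteq> A"
proof (rule ccontr)
  assume no_witness: "\<not> (\<exists>(A, B, C)\<in>L. \<not> B \<subseteq> A)"
  have diagonal: "B = A \<inter> C \<and> finite (C - A)" if "(A, B, C) \<in> L" for A B C
  proof -
    have "(A, B, C) \<in> S"
      using that assms(2) unfolding complemented_bounded_sublattice_def by blast
    moreover have "B \<subseteq> A"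
      using that no_witness by blast
    ultimately show ?thesis
      by (simp add: S_snd_subset_fstD)
  qed
  obtain A B C where x: "(A, B, C) \<in> L" "(A, B, C) \<notin> B0"
    using assms(3) by auto
  have "A \<in> Fk" "C \<in> Fk"
    using x(1) assms(2) unfolding complemented_bounded_sublattice_def S_def by auto
  moreover have "\<not> simF A C"
    using x diagonal[OF x(1)] calculation unfolding B0_def by blast
  ultimately have C_fin: "finite C" and A_cofin: "finite (- A)"
    using finite_and_cofinite_if_not_simF diagonal[OF x(1)] by blast+
  obtain y where "y \<in> L" "Smeet (A, B, C) y = Sbot" "Sjoin (A, B, C) y = Stop"
    using assms(2) x(1) unfolding complemented_bounded_sublattice_def by blast
  then obtain A' B' C' where y: "(A', B', C') \<in> L"
    and meet: "Smeet (A, B, C) (A', B', C') = Sbot" and join: "Sjoin (A, B, C) (A', B', C') = Stop"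
    by (cases y) auto
  have "A' \<subseteq> - A"
    using meet unfolding Smeet_def Sbot_def by auto
  then have "finite A'"
    using A_cofin by (rule finite_subset)
  then have "finite C'"
    using diagonal[OF y] finite_Diff2 by blast
  moreover have "C \<union> C' = UNIV"
    using join Sjoin_third_eq_Un[of B C B' C' A A'] diagonal[OF x(1)] diagonal[OF y]
    unfolding Stop_def by auto
  ultimately show False
    using assms(1) C_fin by (metis finite_UnI)
qed

end
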